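(* Let $A\in\mathbb{C}^{n\times n}$, let $1\le j\le n$, and fix vectors $\mathbf v,\mathbf c_1,\dots,\mathbf c_j\in\mathbb{C}^n$. Consider the map $\mathbf f$ of the variables $\mathbf q_1,\dots,\mathbf q_j\in\mathbb{C}^n$ and $\hat H=(h_{il})\in\mathbb{C}^{j\times j}$ (with columns $\hat{\mathbf h}_1,\dots,\hat{\mathbf h}_j$) whose components are the left-hand sides of the system $$\begin{cases} A[\mathbf q_1,\dots,\mathbf q_j]-[\mathbf q_1,\dots,\mathbf q_j][\hat{\mathbf h}_1,\dots,\hat{\mathbf h}_j]=O,\\ [\mathbf c_1,\dots,\mathbf c_i]^{\mathsf H}\mathbf q_i-(0,\dots,0,1)^\top=\mathbf 0\in\mathbb{C}^i, & i=1,\dots,j,\\ \mathbf q_1-\mathbf v=\mathbf 0,\\ h_{il}=0, & i>l+1.\end{cases}$$ Assume $(\mathbf q_1,\dots,\mathbf q_j,\hat H)$ satisfies this system and $h_{i+1,i}\neq0$ for $i=1,\dots,j-1$. Then the Jacobian of $\mathbf f$ at $(\mathbf q_1,\dots,\mathbf q_j,\hat H)$ is injective.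
   Context: The Jacobian is the complex derivative of $\mathbf f$ with respect to all entries of $\mathbf q_1,\dots,\mathbf q_j$ and all entries of $\hat H$ ($\mathbf f$ is holomorphic in these variables); injective means it has trivial kernel. $X^{\mathsf H}$ denotes conjugate transpose. *)

theory Defs
  imports "HOL-Analysis.Analysis"
begin

text \<open>The index set {1..j} is modelled by a finite well-ordered type 'j; idx i is the
  0-based position of i in that order (so position idx i + 1 in the paper).\<close>

definition idx :: "'j::{finite,wellorder} \<Rightarrow> nat" where
  "idx i = card {k. k < i}"

text \<open>Arguments: Q with Q$i = q_i, H with H$i$l = h_il (row i, column l).\<close>

definition arnoldi_map ::
  "complex^'n^'n \<Rightarrow> complex^'n^('j::{finite,wellorder}) \<Rightarrow> complex^'n \<Rightarrow>
   (complex^'n^('j::{finite,wellorder})) \<times> (complex^('j::{finite,wellorder})^('j::{finite,wellorder})) \<Rightarrow>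
   (complex^'n^('j::{finite,wellorder})) \<times> (complex^('j::{finite,wellorder})^('j::{finite,wellorder})) \<times> (complex^'n) \<times> (complex^('j::{finite,wellorder})^('j::{finite,wellorder}))" where
  "arnoldi_map A c v = (\<lambda>(Q, H).
     ((\<chi> l. A *v (Q$l) - (\<Sum>i\<in>UNIV. H$i$l *s Q$i)),
      (\<chi> i k. if idx k \<le> idx i
               then (\<Sum>m\<in>UNIV. cnj (c$k$m) * Q$i$m) - (if k = i then 1 else 0)
               else 0),
      Q $ (LEAST i. True) - v,
      (\<chi> i l. if idx i > idx l + 1 then H$i$l else 0)))"

end

theory Submission
  imports Defs
begin

text \<open>The Jacobian J is linear, so it suffices to show that J (dQ, dH) = 0 forces dQ = 0 and
  dH = 0. The third block gives dq_1 = 0. Suppose dq_1, ..., dq_l vanish. Column l of the first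
  block reads \<Sum>_i dh_il q_i + \<Sum>_i h_il dq_i = 0. Multiplying by c_k^H with k \<le> l + 1 kills the
  second sum (dq_i = 0 for i \<le> l, and c_k^H dq_i = 0 for k \<le> i by the second block); since
  c_k^H q_i = \<delta>_ki for k \<le> i and dh_il = 0 for i > l + 1, what remains is a unit triangular
  system for column l of dH, which therefore vanishes. Then \<Sum>_i h_il dq_i = h_(l+1,l) dq_(l+1) = 0,
  and h_(l+1,l) \<noteq> 0 gives dq_(l+1) = 0.\<close>

lemma has_derivative_vec_componentwise:
  fixes f :: "'a::real_normed_vector \<Rightarrow> 'b::euclidean_space^'i"
  assumes "\<And>i. ((\<lambda>x. f x $ i) has_derivative (\<lambda>h. f' h $ i)) (at a within S)"
  shows "(f has_derivative f') (at a within S)"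
  unfolding has_derivative_componentwise_within[of f] Basis_vec_def
  by (auto simp: inner_axis intro: has_derivative_inner_left assms)

lemma has_derivative_if_const:
  "(P \<Longrightarrow> (f has_derivative f') F) \<Longrightarrow> (\<not> P \<Longrightarrow> (g has_derivative g') F) \<Longrightarrow>
   ((\<lambda>x. if P then f x else g x) has_derivative (\<lambda>h. if P then f' h else g' h)) F"
  by (cases P) simp_all

definition cinner :: "complex^'n \<Rightarrow> complex^'n \<Rightarrow> complex" where
  "cinner u x = (\<Sum>m\<in>UNIV. cnj (u$m) * x$m)"

lemma cinner_zero_right [simp]: "cinner u 0 = 0"
  by (simp add: cinner_def)

lemma cinner_add_right [simp]: "cinner u (x + y) = cinner u x + cinner u y"
  by (simp add: cinner_def distrib_left sum.distrib)

lemma cinner_sum_scale_right [simp]: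
  "cinner u (\<Sum>i\<in>I. a i *s x i) = (\<Sum>i\<in>I. a i * cinner u (x i))"
proof -
  have "cinner u (\<Sum>i\<in>I. a i *s x i) = (\<Sum>m\<in>UNIV. \<Sum>i\<in>I. a i * (cnj (u$m) * x i $ m))"
    by (simp add: cinner_def sum_component sum_distrib_left mult.left_commute)
  also have "\<dots> = (\<Sum>i\<in>I. a i * cinner u (x i))"
    by (subst sum.swap) (simp add: cinner_def sum_distrib_left)
  finally show ?thesis .
qed

lemma strict_mono_idx: "strict_mono (idx :: 'j::{finite,wellorder} \<Rightarrow> nat)"
  unfolding strict_mono_def idx_def by (auto intro!: psubset_card_mono)

lemma idx_le_iff: "idx i \<le> idx k \<longleftrightarrow> i \<le> k"
  by (rule strict_mono_less_eq[OF strict_mono_idx])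

lemma idx_eq_iff: "idx i = idx k \<longleftrightarrow> i = k"
  by (rule strict_mono_eq[OF strict_mono_idx])

lemma idx_eq_0_iff: "idx i = 0 \<longleftrightarrow> i = (LEAST i. True)"
  unfolding idx_def
  by (auto simp: not_less intro!: Least_equality[symmetric] Least_le dest: not_less_Least)

lemma idx_less_card: "idx (i :: 'j::{finite,wellorder}) < CARD('j)"
  unfolding idx_def by (rule psubset_card_mono) auto

lemma range_idx: "range (idx :: 'j::{finite,wellorder} \<Rightarrow> nat) = {..<CARD('j)}"
proof (rule card_subset_eq)
  show "range (idx :: 'j \<Rightarrow> nat) \<subseteq> {..<CARD('j)}"
    using idx_less_card by auto
  show "card (range (idx :: 'j \<Rightarrow> nat)) = card {..<CARD('j)}"
    by (simp add: card_image strict_mono_imp_inj_on strict_mono_idx)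
qed simp

lemma upper_unitriangular_combination_eq_0:
  fixes M :: "'j::{finite,wellorder} \<Rightarrow> 'j \<Rightarrow> 'a::semiring_1"
  assumes unitri: "\<And>k i. k \<le> i \<Longrightarrow> M k i = (if k = i then 1 else 0)"
    and outside: "\<And>i. i \<notin> K \<Longrightarrow> x i = 0"
    and comb: "\<And>k. k \<in> K \<Longrightarrow> (\<Sum>i\<in>UNIV. x i * M k i) = 0"
  shows "x k = 0"
proof (induction k rule: less_induct)
  case (less k)
  show ?case
  proof (cases "k \<in> K")
    case True
    have "x i * M k i = (if i = k then x k else 0)" for i
      using less.IH unitri[of k i] by (cases i k rule: linorder_cases) simp_all
    then show ?thesis using comb[OF True] by simp
  qed (rule outside)
qed

definition arnoldi_jacobian ::
  "complex^'n^'n \<Rightarrow> complex^'n^('j::{finite,wellorder}) \<Rightarrow>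
   complex^'n^('j::{finite,wellorder}) \<Rightarrow> complex^('j::{finite,wellorder})^('j::{finite,wellorder}) \<Rightarrow>
   (complex^'n^('j::{finite,wellorder})) \<times> (complex^('j::{finite,wellorder})^('j::{finite,wellorder})) \<Rightarrow>
   (complex^'n^('j::{finite,wellorder})) \<times> (complex^('j::{finite,wellorder})^('j::{finite,wellorder})) \<times>
   (complex^'n) \<times> (complex^('j::{finite,wellorder})^('j::{finite,wellorder}))" where
  "arnoldi_jacobian A c Q H = (\<lambda>(dQ, dH).
     ((\<chi> l. A *v dQ$l - (\<Sum>i\<in>UNIV. dH$i$l *s Q$i + H$i$l *s dQ$i)),
      (\<chi> i k. if idx k \<le> idx i then cinner (c$k) (dQ$i) else 0),
      dQ $ (LEAST i. True),
      (\<chi> i l. if idx i > idx l + 1 then dH$i$l else 0)))"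

lemma has_derivative_arnoldi_map:
  "(arnoldi_map A c v has_derivative arnoldi_jacobian A c Q H) (at (Q, H))"
  unfolding arnoldi_map_def arnoldi_jacobian_def split_beta' cinner_def
  by (intro has_derivative_Pair has_derivative_vec_componentwise)
     (auto simp: matrix_vector_mult_def sum.distrib
        intro!: derivative_eq_intros has_derivative_if_const
          bounded_linear.has_derivative[OF bounded_linear_vec_nth])

lemma arnoldi_map_eq_0D:
  assumes "arnoldi_map A c v (Q, H) = 0"
  shows "k \<le> i \<Longrightarrow> cinner (c$k) (Q$i) = (if k = i then 1 else 0)"
    and "idx l + 1 < idx i \<Longrightarrow> H$i$l = 0"
proof -
  have "fst (snd (arnoldi_map A c v (Q, H))) $ i $ k = 0"
    "snd (snd (snd (arnoldi_map A c v (Q, H)))) $ i $ l = 0"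
    using assms by simp_all
  then show "k \<le> i \<Longrightarrow> cinner (c$k) (Q$i) = (if k = i then 1 else 0)"
    and "idx l + 1 < idx i \<Longrightarrow> H$i$l = 0"
    by (simp_all add: arnoldi_map_def cinner_def idx_le_iff)
qed

lemma arnoldi_jacobian_eq_0D:
  assumes "arnoldi_jacobian A c Q H (dQ, dH) = 0"
  shows "A *v dQ$l = (\<Sum>i\<in>UNIV. dH$i$l *s Q$i + H$i$l *s dQ$i)"
    and "k \<le> i \<Longrightarrow> cinner (c$k) (dQ$i) = 0"
    and "dQ $ (LEAST i. True) = 0"
    and "idx l + 1 < idx i \<Longrightarrow> dH$i$l = 0"
proof -
  have "fst (arnoldi_jacobian A c Q H (dQ, dH)) $ l = 0"
    "fst (snd (arnoldi_jacobian A c Q H (dQ, dH))) $ i $ k = 0"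
    "fst (snd (snd (arnoldi_jacobian A c Q H (dQ, dH)))) = 0"
    "snd (snd (snd (arnoldi_jacobian A c Q H (dQ, dH)))) $ i $ l = 0"
    using assms by simp_all
  then show "A *v dQ$l = (\<Sum>i\<in>UNIV. dH$i$l *s Q$i + H$i$l *s dQ$i)"
    and "k \<le> i \<Longrightarrow> cinner (c$k) (dQ$i) = 0"
    and "dQ $ (LEAST i. True) = 0"
    and "idx l + 1 < idx i \<Longrightarrow> dH$i$l = 0"
    by (simp_all add: arnoldi_jacobian_def idx_le_iff)
qed

lemma hessenberg_column_perturbation_eq_0:
  fixes Q dQ :: "complex^'n^('j::{finite,wellorder})" and y h :: "'j \<Rightarrow> complex"
  assumes biorth: "\<And>k i. k \<le> i \<Longrightarrow> cinner (c$k) (Q$i) = (if k = i then 1 else 0)"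
    and dbiorth: "\<And>k i. k \<le> i \<Longrightarrow> cinner (c$k) (dQ$i) = 0"
    and lower: "\<And>i. idx i \<le> N \<Longrightarrow> dQ$i = 0"
    and hess: "\<And>i. N + 1 < idx i \<Longrightarrow> y i = 0"
    and col: "(\<Sum>i\<in>UNIV. y i *s Q$i + h i *s dQ$i) = 0"
  shows "y i = 0"
proof (rule upper_unitriangular_combination_eq_0
    [where x = y and K = "{k. idx k \<le> N + 1}", OF biorth])
  show "y i = 0" if "i \<notin> {k. idx k \<le> N + 1}" for i
    using that hess by simp
  fix k :: 'j assume "k \<in> {k. idx k \<le> N + 1}"
  then have "h i * cinner (c$k) (dQ$i) = 0" for i
    using lower[of i] dbiorth[of k i] by (cases "idx i \<le> N") (simp_all flip: idx_le_iff)
  then have "(\<Sum>i\<in>UNIV. h i * cinner (c$k) (dQ$i)) = 0"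
    by (simp add: sum.neutral)
  moreover have "(\<Sum>i\<in>UNIV. y i * cinner (c$k) (Q$i)) + (\<Sum>i\<in>UNIV. h i * cinner (c$k) (dQ$i)) = 0"
    using arg_cong[OF col, of "cinner (c$k)"] by (simp add: sum.distrib)
  ultimately show "(\<Sum>i\<in>UNIV. y i * cinner (c$k) (Q$i)) = 0"
    by simp
qed

lemma hessenberg_subdiagonal_perturbation_eq_0:
  fixes dQ :: "complex^'n^('j::{finite,wellorder})" and h :: "'j \<Rightarrow> complex"
  assumes comb: "(\<Sum>i\<in>UNIV. h i *s dQ$i) = 0"
    and lower: "\<And>i. idx i \<le> N \<Longrightarrow> dQ$i = 0"
    and hess: "\<And>i. N + 1 < idx i \<Longrightarrow> h i = 0"
    and sub: "idx s = N + 1" "h s \<noteq> 0"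
  shows "dQ$s = 0"
proof -
  have "(\<Sum>i\<in>UNIV. h i *s dQ$i) = (\<Sum>i\<in>{s}. h i *s dQ$i)"
  proof (rule sum.mono_neutral_right)
    show "\<forall>i\<in>UNIV - {s}. h i *s dQ$i = 0"
    proof
      fix i assume "i \<in> UNIV - {s}"
      then have "idx i \<noteq> N + 1"
        using sub(1) idx_eq_iff[of i s] by auto
      then have "idx i \<le> N \<or> N + 1 < idx i"
        by linarith
      then show "h i *s dQ$i = 0"
        using lower hess by auto
    qed
  qed simp_all
  then have "h s *s dQ$s = 0"
    using comb by simp
  then show ?thesis
    using sub(2) by (simp add: vec_eq_iff)
qed

lemma arnoldi_jacobian_eq_0_iff:
  fixes Q dQ :: "complex^'n^('j::{finite,wellorder})"
    and H dH :: "complex^('j::{finite,wellorder})^('j::{finite,wellorder})"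
  assumes biorth: "\<And>k i. k \<le> i \<Longrightarrow> cinner (c$k) (Q$i) = (if k = i then 1 else 0)"
    and hess: "\<And>i l. idx l + 1 < idx i \<Longrightarrow> H$i$l = 0"
    and subdiag: "\<And>i l. idx i = idx l + 1 \<Longrightarrow> H$i$l \<noteq> 0"
  shows "arnoldi_jacobian A c Q H (dQ, dH) = 0 \<longleftrightarrow> (dQ, dH) = 0"
proof
  show "(dQ, dH) = 0 \<Longrightarrow> arnoldi_jacobian A c Q H (dQ, dH) = 0"
    by (simp add: arnoldi_jacobian_def zero_prod_def) (simp add: vec_eq_iff)
  assume kernel: "arnoldi_jacobian A c Q H (dQ, dH) = 0"
  note J = arnoldi_jacobian_eq_0D[OF kernel]
  have column_eq: "(\<Sum>i\<in>UNIV. dH$i$l *s Q$i + H$i$l *s dQ$i) = 0" if "dQ$l = 0" for l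
    using J(1)[of l] that by simp
  have dH_column: "dH$i$l = 0" if lower: "\<And>i. idx i \<le> idx l \<Longrightarrow> dQ$i = 0" for i l
    by (rule hessenberg_column_perturbation_eq_0
        [OF biorth J(2) lower J(4) column_eq[OF lower[OF order_refl]]])
  have dQ_lower: "dQ$i = 0" if "idx i \<le> N" for N i
    using that
  proof (induction N arbitrary: i)
    case 0
    then show ?case using J(3) by (simp add: idx_eq_0_iff)
  next
    case (Suc N)
    show ?case
    proof (cases "idx i \<le> N")
      case False
      then have idx_i: "idx i = N + 1"
        using Suc.prems by simp
      then have "N \<in> range (idx :: 'j \<Rightarrow> nat)"
        using idx_less_card[of i] by (simp add: range_idx)
      then obtain l :: 'j where idx_l: "idx l = N"
        by blast
      have lower: "\<And>i. idx i \<le> idx l \<Longrightarrow> dQ$i = 0"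
        using Suc.IH idx_l by simp
      have "(\<Sum>i\<in>UNIV. H$i$l *s dQ$i) = 0"
        using column_eq[OF lower[OF order_refl]] dH_column[OF lower] by simp
      then show ?thesis
        by (rule hessenberg_subdiagonal_perturbation_eq_0[OF _ lower hess])
           (use idx_i idx_l subdiag in simp_all)
    qed (rule Suc.IH)
  qed
  have "dQ = 0"
    using dQ_lower[OF order_refl] by (simp add: vec_eq_iff)
  moreover have "dH = 0"
    using dH_column \<open>dQ = 0\<close> by (simp add: vec_eq_iff)
  ultimately show "(dQ, dH) = 0"
    by (simp add: zero_prod_def)
qed

theorem proposition2:
  fixes A :: "complex^'n^'n"
    and c :: "complex^'n^('j::{finite,wellorder})"
    and v :: "complex^'n"
    and Q :: "complex^'n^('j::{finite,wellorder})"
    and H :: "complex^('j::{finite,wellorder})^('j::{finite,wellorder})"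
  assumes "CARD('j) \<le> CARD('n)"
    and "arnoldi_map A c v (Q, H) = 0"
    and "\<forall>i l. idx i = idx l + 1 \<longrightarrow> H$i$l \<noteq> 0"
  shows "\<exists>f'. (arnoldi_map A c v has_derivative f') (at (Q, H)) \<and> inj f'"
proof (intro exI conjI)
  show deriv: "(arnoldi_map A c v has_derivative arnoldi_jacobian A c Q H) (at (Q, H))"
    by (rule has_derivative_arnoldi_map)
  have jacobian_linear: "linear (arnoldi_jacobian A c Q H)"
    using deriv by (simp add: has_derivative_bounded_linear bounded_linear.linear)
  have kernel: "arnoldi_jacobian A c Q H (dQ, dH) = 0 \<longleftrightarrow> (dQ, dH) = 0" for dQ dH
    using arnoldi_jacobian_eq_0_iff[OF arnoldi_map_eq_0D[OF assms(2)]] assms(3) by blast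
  show "inj (arnoldi_jacobian A c Q H)"
    unfolding linear_injective_0[OF jacobian_linear] using kernel by (simp add: split_paired_all)
qed

end
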